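(* Let $J\subseteq S$ and let $u,v\in\mathfrak{S}_n^J$ with $u\lessdot_S v$ (a cover relation in weak order). The following are equivalent: (i) there are indices $i<j<k$, each in different $J$-regions, such that $v_k<v_i<v_j$, $v_i=v_k+1$, and $\mathrm{inv}(v)\setminus\mathrm{inv}(u)=\{(i,k)\}$; (ii) $\Pi_\downarrow^J(u)=\Pi_\downarrow^J(v)$; (iii) $\Pi_\uparrow^J(u)=\Pi_\uparrow^J(v)$.
   Context: $\mathfrak{S}_n$ is the symmetric group on $[n]$, $s_i=(i,i+1)$, $S=\{s_1,\dots,s_{n-1}\}$, one-line notation $w=w_1\cdots w_n$, $\mathrm{inv}(w)=\{(i,j):i<j,\ w_i>w_j\}$, weak order $u\le_S v\iff\mathrm{inv}(u)\subseteq\mathrm{inv}(v)$; $u\lessdot_S v$ means $\mathrm{inv}(v)\setminus\mathrm{inv}(u)=\{(i,j)\}$ for a single pair with $v_i=v_j+1$ and $\mathrm{inv}(u)\subseteq\mathrm{inv}(v)$. For $J\subseteq S$, $\mathfrak{S}_n^J$ is the set of $w$ with $w_i<w_{i+1}$ whenever $s_i\in J$. Writing $J=S\setminus\{s_{j_1},\dots,s_{j_r}\}$ with $j_1<\dots<j_r$, the $J$-regions are $\{1,\dots,j_1\},\{j_1+1,\dots,j_2\},\dots,\{j_r+1,\dots,n\}$. $w\in\mathfrak{S}_n^J$ is $(J,231)$-avoiding if there are no indices $i<j<k$ in pairwise different $J$-regions with $w_k<w_i<w_j$ and $w_i=w_k+1$, and $(J,132)$-avoiding if there are no indices $i<j<k$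 in pairwise different $J$-regions with $w_i<w_k<w_j$ and $w_k=w_i+1$. For $w\in\mathfrak{S}_n^J$, $\Pi_\downarrow^J(w)$ is the unique greatest $(J,231)$-avoiding element of $\mathfrak{S}_n^J$ that is $\le_S w$, and $\Pi_\uparrow^J(w)$ is the unique least $(J,132)$-avoiding element of $\mathfrak{S}_n^J$ that is $\ge_S w$ (both exist). *)

theory Defs
  imports "HOL-Combinatorics.Permutations"
begin

text \<open>Permutations of [n] are functions w :: nat => nat with w permutes {1..n};
  the one-line entry w_i is w i. A subset J of S = {s_1,...,s_(n-1)} is encoded
  by the index set J, a subset of {1..<n} (s_i in J iff i in J).\<close>

definition inv_set :: "nat \<Rightarrow> (nat \<Rightarrow> nat) \<Rightarrow> (nat \<times> nat) set" where
  "inv_set n w = {(i, j). 1 \<le> i \<and> i < j \<and> j \<le> n \<and> w i > w j}"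

definition weak_le :: "nat \<Rightarrow> (nat \<Rightarrow> nat) \<Rightarrow> (nat \<Rightarrow> nat) \<Rightarrow> bool" where
  "weak_le n u v \<longleftrightarrow> inv_set n u \<subseteq> inv_set n v"

definition weak_cover :: "nat \<Rightarrow> (nat \<Rightarrow> nat) \<Rightarrow> (nat \<Rightarrow> nat) \<Rightarrow> bool" where
  "weak_cover n u v \<longleftrightarrow> inv_set n u \<subseteq> inv_set n v \<and>
     (\<exists>i j. inv_set n v - inv_set n u = {(i, j)} \<and> v i = v j + 1)"

definition SJ :: "nat \<Rightarrow> nat set \<Rightarrow> (nat \<Rightarrow> nat) set" where
  "SJ n J = {w. w permutes {1..n} \<and> (\<forall>i\<in>J. w i < w (Suc i))}"

definition same_region :: "nat \<Rightarrow> nat set \<Rightarrow> nat \<Rightarrow> nat \<Rightarrow> bool" where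
  "same_region n J i j \<longleftrightarrow> (\<forall>d\<in>{1..<n} - J. \<not> (min i j \<le> d \<and> d < max i j))"

definition diff_regions :: "nat \<Rightarrow> nat set \<Rightarrow> nat \<Rightarrow> nat \<Rightarrow> nat \<Rightarrow> bool" where
  "diff_regions n J i j k \<longleftrightarrow>
     \<not> same_region n J i j \<and> \<not> same_region n J j k \<and> \<not> same_region n J i k"

definition avoids231 :: "nat \<Rightarrow> nat set \<Rightarrow> (nat \<Rightarrow> nat) \<Rightarrow> bool" where
  "avoids231 n J w \<longleftrightarrow> \<not> (\<exists>i j k. 1 \<le> i \<and> i < j \<and> j < k \<and> k \<le> n \<and>
      diff_regions n J i j k \<and> w k < w i \<and> w i < w j \<and> w i = w k + 1)"

definition avoids132 :: "nat \<Rightarrow> nat set \<Rightarrow> (nat \<Rightarrow> nat) \<Rightarrow> bool" where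
  "avoids132 n J w \<longleftrightarrow> \<not> (\<exists>i j k. 1 \<le> i \<and> i < j \<and> j < k \<and> k \<le> n \<and>
      diff_regions n J i j k \<and> w i < w k \<and> w k < w j \<and> w k = w i + 1)"

definition Pi_down :: "nat \<Rightarrow> nat set \<Rightarrow> (nat \<Rightarrow> nat) \<Rightarrow> (nat \<Rightarrow> nat)" where
  "Pi_down n J w = (THE x. x \<in> SJ n J \<and> avoids231 n J x \<and> weak_le n x w \<and>
      (\<forall>y\<in>SJ n J. avoids231 n J y \<and> weak_le n y w \<longrightarrow> weak_le n y x))"

definition Pi_up :: "nat \<Rightarrow> nat set \<Rightarrow> (nat \<Rightarrow> nat) \<Rightarrow> (nat \<Rightarrow> nat)" where
  "Pi_up n J w = (THE x. x \<in> SJ n J \<and> avoids132 n J x \<and> weak_le n w x \<and>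
      (\<forall>y\<in>SJ n J. avoids132 n J y \<and> weak_le n w y \<longrightarrow> weak_le n x y))"

end

theory Submission
  imports Defs
begin

text \<open>Let (i, j, k) be a J-231 pattern of w, i.e. w_k + 1 = w_i < w_j. Swapping the values
  at positions i and k removes exactly the inversion (i, k), and no (J,231)-avoiding element
  below w has this inversion: otherwise, walking up through the values from w_k to w_i, none
  of which sits strictly between positions i and k, one finds consecutive values c, c + 1 at
  positions p >= k and p' <= i, and (p', j, p) is a J-231 pattern of the avoiding element.
  So the swap leaves Pi_down unchanged, and iterating it constructs Pi_down; dually, swapping
  a J-132 pattern leaves Pi_up unchanged.

  If u is covered by v with inv(v) - inv(u) = {(i, k)}, then u is v with the adjacent values
  at i and k swapped. If some j makes (i, j, k) a J-231 pattern of v, it is a J-132 pattern of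
  u, so both projections agree. Otherwise every j in a third region has v_j < v_k; then no
  swap in the construction of Pi_down v can remove (i, k), since swaps only remove inversions
  and removing (i, k) needs an inversion (j, k) with j in a third region; but Pi_down u is
  below u, which lacks (i, k). Dually (i, k) is never added on the way from u to Pi_up u.\<close>

section \<open>Inversion sets and swaps of adjacent values\<close>

lemma finite_inv_set: "finite (inv_set n w)"
  by (rule finite_subset[of _ "{1..n} \<times> {1..n}"]) (auto simp: inv_set_def)

lemma not_in_inv_set_iff:
  assumes "inj x" "1 \<le> a" "a < b" "b \<le> n"
  shows "(a, b) \<notin> inv_set n x \<longleftrightarrow> x a < x b"
proof -
  have "x a \<noteq> x b"
    using assms by (auto dest: injD)
  then show ?thesis
    using assms by (auto simp: inv_set_def)
qed

lemma permutes_value_eq_card: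
  assumes w: "w permutes {1..n}" and p: "p \<in> {1..n}"
  shows "w p = card {q \<in> {1..n}. w q \<le> w p}"
proof -
  have "w p \<in> {1..n}"
    using permutes_in_image[OF w] p by simp
  have "w ` {q \<in> {1..n}. w q \<le> w p} = {c \<in> w ` {1..n}. c \<le> w p}"
    by auto
  also have "\<dots> = {1..w p}"
    using permutes_image[OF w] \<open>w p \<in> {1..n}\<close> by auto
  finally have "card {q \<in> {1..n}. w q \<le> w p} = card {1..w p}"
    by (metis (no_types, lifting) card_image inj_on_subset permutes_inj[OF w] subset_UNIV)
  then show ?thesis
    by simp
qed

lemma permutes_eq_if_inv_set_eq:
  assumes x: "x permutes {1..n}" and y: "y permutes {1..n}"
    and eq: "inv_set n x = inv_set n y"
  shows "x = y"
proof
  fix p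
  show "x p = y p"
  proof (cases "p \<in> {1..n}")
    case False
    then show ?thesis
      using x y by (simp add: permutes_not_in)
  next
    case True
    have inv_iff: "x b < x a \<longleftrightarrow> y b < y a" if "a < b" "a \<in> {1..n}" "b \<in> {1..n}" for a b
      using eq that unfolding set_eq_iff inv_set_def by (auto dest: spec[of _ "(a, b)"])
    have "x q \<le> x p \<longleftrightarrow> y q \<le> y p" if q: "q \<in> {1..n}" for q
    proof -
      consider "q < p" | "q = p" | "p < q"
        by linarith
      then show ?thesis
      proof cases
        case 1
        then show ?thesis
          using inv_iff[of q p] q True by (simp add: not_less[symmetric])
      next
        case 3
        then have "x q \<noteq> x p" "y q \<noteq> y p"
          using permutes_inj[OF x] permutes_inj[OF y] by (auto simp: inj_eq)
        then show ?thesis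
          using inv_iff[of p q] 3 q True by (simp add: order_le_less)
      qed simp
    qed
    then have "{q \<in> {1..n}. x q \<le> x p} = {q \<in> {1..n}. y q \<le> y p}"
      by blast
    then show ?thesis
      using permutes_value_eq_card[OF x True] permutes_value_eq_card[OF y True] by simp
  qed
qed

lemma swap_adjacent_values_less_iff:
  assumes "inj w" and "w i = Suc (w k) \<or> w k = Suc (w i)" and "{p, q} \<noteq> {i, k}"
  shows "(w \<circ> transpose i k) p < (w \<circ> transpose i k) q \<longleftrightarrow> w p < w q"
proof -
  have "w p = w i \<longleftrightarrow> p = i" "w p = w k \<longleftrightarrow> p = k" "w q = w i \<longleftrightarrow> q = i" "w q = w k \<longleftrightarrow> q = k"
    using assms(1) by (simp_all add: inj_eq)
  then show ?thesis
    using assms(2,3) by (auto simp: transpose_def doubleton_eq_iff)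
qed

lemma inv_set_swap_adjacent_values:
  assumes "inj w" and "i < k" and "w i = Suc (w k)"
  shows "inv_set n (w \<circ> transpose i k) = inv_set n w - {(i, k)}"
proof -
  have "(w \<circ> transpose i k) q < (w \<circ> transpose i k) p \<longleftrightarrow> w q < w p"
    if "p < q" "(p, q) \<noteq> (i, k)" for p q
    using swap_adjacent_values_less_iff[OF assms(1), of i k q p] assms that
    by (auto simp: doubleton_eq_iff)
  moreover have "(i, k) \<notin> inv_set n (w \<circ> transpose i k)"
    using assms(3) by (simp add: inv_set_def)
  ultimately show ?thesis
    unfolding inv_set_def by fastforce
qed

lemma swap_adjacent_values_in_SJ:
  assumes w: "w \<in> SJ n J" and ik: "i \<in> {1..n}" "k \<in> {1..n}" "Suc i < k"
    and adj: "w i = Suc (w k) \<or> w k = Suc (w i)"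
  shows "w \<circ> transpose i k \<in> SJ n J"
proof -
  have perm: "w permutes {1..n}" and asc: "\<And>p. p \<in> J \<Longrightarrow> w p < w (Suc p)"
    using w by (auto simp: SJ_def)
  have "{p, Suc p} \<noteq> {i, k}" for p
    using ik(3) by (auto simp: doubleton_eq_iff)
  then have "(w \<circ> transpose i k) p < (w \<circ> transpose i k) (Suc p)" if "p \<in> J" for p
    using swap_adjacent_values_less_iff[OF permutes_inj[OF perm] adj] asc[OF that] by blast
  moreover have "w \<circ> transpose i k permutes {1..n}"
    using permutes_compose[OF permutes_swap_id[OF ik(1,2)] perm] .
  ultimately show ?thesis
    by (simp add: SJ_def)
qed

section \<open>J-patterns\<close>

definition pattern231 :: "nat \<Rightarrow> nat set \<Rightarrow> (nat \<Rightarrow> nat) \<Rightarrow> nat \<Rightarrow> nat \<Rightarrow> nat \<Rightarrow> bool" where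
  "pattern231 n J w i j k \<longleftrightarrow> 1 \<le> i \<and> i < j \<and> j < k \<and> k \<le> n \<and> diff_regions n J i j k \<and>
     w k < w i \<and> w i < w j \<and> w i = w k + 1"

definition pattern132 :: "nat \<Rightarrow> nat set \<Rightarrow> (nat \<Rightarrow> nat) \<Rightarrow> nat \<Rightarrow> nat \<Rightarrow> nat \<Rightarrow> bool" where
  "pattern132 n J w i j k \<longleftrightarrow> 1 \<le> i \<and> i < j \<and> j < k \<and> k \<le> n \<and> diff_regions n J i j k \<and>
     w i < w k \<and> w k < w j \<and> w k = w i + 1"

lemma avoids231_iff: "avoids231 n J w \<longleftrightarrow> (\<nexists>i j k. pattern231 n J w i j k)"
  by (simp add: avoids231_def pattern231_def)

lemma avoids132_iff: "avoids132 n J w \<longleftrightarrow> (\<nexists>i j k. pattern132 n J w i j k)"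
  by (simp add: avoids132_def pattern132_def)

lemma pattern132_swap_pattern231:
  assumes "pattern231 n J w i j k"
  shows "pattern132 n J (w \<circ> transpose i k) i j k"
  using assms by (auto simp: pattern231_def pattern132_def)

lemma diff_regions_widen:
  assumes "diff_regions n J i j k" "i < j" "j < k" "i' \<le> i" "k \<le> k'"
  shows "diff_regions n J i' j k'"
  using assms unfolding diff_regions_def same_region_def
  by (simp add: min_def max_def split: if_splits) (meson le_trans less_le_trans)

lemma nat_predicate_changes:
  assumes "P a" "\<not> P b" "a \<le> b"
  shows "\<exists>c. a \<le> c \<and> c < b \<and> P c \<and> \<not> P (Suc c)"
  using assms
proof (induction b)
  case (Suc b)
  then show ?case
    by (cases "P b") (auto simp: le_Suc_eq, metis less_SucI)
qed simp

lemma permutes_adjacent_values_cross: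
  assumes x: "x permutes {1..n}" and st: "s \<in> A" "t \<in> B" "t \<in> {1..n}" "x s < x t"
    and disj: "A \<inter> B = {}"
    and between: "\<And>q. q \<in> {1..n} \<Longrightarrow> x s < x q \<Longrightarrow> x q < x t \<Longrightarrow> q \<in> A \<union> B"
  obtains p p' where "p \<in> A" "p' \<in> B" "x p' \<le> x t" "x p' = Suc (x p)"
proof -
  let ?P = "\<lambda>c. \<exists>p\<in>A. x p = c"
  have "\<not> ?P (x t)"
    using permutes_inj[OF x] st(2) disj by (auto simp: inj_eq)
  then obtain c where c: "x s \<le> c" "c < x t" "?P c" "\<not> ?P (Suc c)"
    using nat_predicate_changes[of ?P "x s" "x t"] st by auto
  then obtain p where p: "p \<in> A" "x p = c"
    by blast
  have "x t \<in> {1..n}"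
    using permutes_in_image[OF x] st(3) by simp
  then have "Suc c \<in> {1..n}"
    using c(2) by simp
  then obtain p' where p': "p' \<in> {1..n}" "x p' = Suc c"
    using permutes_image[OF x] by (metis imageE)
  have "p' \<in> B"
  proof (cases "Suc c = x t")
    case True
    then show ?thesis
      using p' permutes_inj[OF x] st(2) by (auto simp: inj_eq)
  next
    case False
    then show ?thesis
      using between[OF p'(1)] p' c by auto
  qed
  then show ?thesis
    using that p p' c by auto
qed

lemma pattern231_top_not_inv_below:
  assumes x: "x permutes {1..n}" "avoids231 n J x" and below: "inv_set n x \<subseteq> inv_set n w"
    and pat: "pattern231 n J w i j k"
  shows "(i, k) \<notin> inv_set n x"
proof
  assume ik: "(i, k) \<in> inv_set n x"
  have ijk: "1 \<le> i" "i < j" "j < k" "k \<le> n" "diff_regions n J i j k"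
    and w: "w i = Suc (w k)" "w i < w j"
    using pat by (auto simp: pattern231_def)
  have "(i, j) \<notin> inv_set n x"
    using below w(2) by (auto simp: inv_set_def)
  then have xij: "x i < x j"
    using not_in_inv_set_iff[OF permutes_inj[OF x(1)]] ijk by simp
  have between: "q \<in> {k..n} \<union> {1..i}" if "q \<in> {1..n}" "x k < x q" "x q < x i" for q
  proof (rule ccontr)
    assume "q \<notin> {k..n} \<union> {1..i}"
    then have "(i, q) \<in> inv_set n x" "(q, k) \<in> inv_set n x"
      using that ijk by (auto simp: inv_set_def)
    then have "(i, q) \<in> inv_set n w" "(q, k) \<in> inv_set n w"
      using below by auto
    then have "w k < w q" "w q < w i"
      by (simp_all add: inv_set_def)
    then show False
      using w(1) by simp
  qed
  obtain p p' where p: "p \<in> {k..n}" "p' \<in> {1..i}" "x p' \<le> x i" "x p' = Suc (x p)"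
    using permutes_adjacent_values_cross[OF x(1), of k "{k..n}" i "{1..i}"] ik ijk between
    by (auto simp: inv_set_def)
  then have "pattern231 n J x p' j p"
    using ijk xij diff_regions_widen[OF ijk(5,2,3), of p' p] by (auto simp: pattern231_def)
  then show False
    using x(2) by (auto simp: avoids231_iff)
qed

lemma pattern132_top_inv_above:
  assumes x: "x permutes {1..n}" "avoids132 n J x" and above: "inv_set n w \<subseteq> inv_set n x"
    and "inj w" and pat: "pattern132 n J w i j k"
  shows "(i, k) \<in> inv_set n x"
proof (rule ccontr)
  assume "(i, k) \<notin> inv_set n x"
  have ijk: "1 \<le> i" "i < j" "j < k" "k \<le> n" "diff_regions n J i j k"
    and w: "w k = Suc (w i)" "w k < w j"
    using pat by (auto simp: pattern132_def)
  have xik: "x i < x k"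
    using \<open>(i, k) \<notin> inv_set n x\<close> not_in_inv_set_iff[OF permutes_inj[OF x(1)]] ijk
    by simp
  have "(j, k) \<in> inv_set n w"
    using w(2) ijk by (simp add: inv_set_def)
  then have "(j, k) \<in> inv_set n x"
    using above by blast
  then have xkj: "x k < x j"
    by (simp add: inv_set_def)
  have between: "q \<in> {1..i} \<union> {k..n}" if "q \<in> {1..n}" "x i < x q" "x q < x k" for q
  proof (rule ccontr)
    assume "q \<notin> {1..i} \<union> {k..n}"
    then have "(i, q) \<notin> inv_set n x" "(q, k) \<notin> inv_set n x"
      using that ijk by (auto simp: inv_set_def)
    then have "(i, q) \<notin> inv_set n w" "(q, k) \<notin> inv_set n w"
      using above by auto
    then have "w i < w q" "w q < w k"
      using \<open>q \<notin> {1..i} \<union> {k..n}\<close> that ijk not_in_inv_set_iff[OF \<open>inj w\<close>]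
      by auto
    then show False
      using w(1) by simp
  qed
  obtain p p' where p: "p \<in> {1..i}" "p' \<in> {k..n}" "x p' \<le> x k" "x p' = Suc (x p)"
    using permutes_adjacent_values_cross[OF x(1), of i "{1..i}" k "{k..n}"] xik ijk between
    by auto
  then have "pattern132 n J x p j p'"
    using ijk xkj diff_regions_widen[OF ijk(5,2,3), of p p'] by (auto simp: pattern132_def)
  then show False
    using x(2) by (auto simp: avoids132_iff)
qed

lemma swap_pattern231:
  assumes w: "w \<in> SJ n J" and pat: "pattern231 n J w i j k"
  shows "w \<circ> transpose i k \<in> SJ n J"
    and "inv_set n (w \<circ> transpose i k) = inv_set n w - {(i, k)}"
proof -
  have "inj w"
    using w permutes_inj by (auto simp: SJ_def)
  then show "w \<circ> transpose i k \<in> SJ n J" "inv_set n (w \<circ> transpose i k) = inv_set n w - {(i, k)}"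
    using swap_adjacent_values_in_SJ[OF w] inv_set_swap_adjacent_values pat
    by (auto simp: pattern231_def)
qed

lemma swap_pattern132:
  assumes w: "w \<in> SJ n J" and pat: "pattern132 n J w i j k"
  shows "w \<circ> transpose i k \<in> SJ n J"
    and "inv_set n (w \<circ> transpose i k) = insert (i, k) (inv_set n w)"
proof -
  let ?w' = "w \<circ> transpose i k"
  have "inj w"
    using w permutes_inj by (auto simp: SJ_def)
  then have "inj ?w'"
    by (simp add: inj_compose inj_transpose)
  show "?w' \<in> SJ n J"
    using swap_adjacent_values_in_SJ[OF w] pat by (auto simp: pattern132_def)
  have "?w' \<circ> transpose i k = w"
    by (simp add: comp_assoc)
  then have "inv_set n w = inv_set n (?w' \<circ> transpose i k)"
    by simp
  also have "\<dots> = inv_set n ?w' - {(i, k)}"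
    using inv_set_swap_adjacent_values[OF \<open>inj ?w'\<close>] pat by (simp add: pattern132_def)
  moreover have "(i, k) \<in> inv_set n ?w'"
    using pat by (simp add: pattern132_def inv_set_def)
  ultimately show "inv_set n ?w' = insert (i, k) (inv_set n w)"
    by blast
qed

section \<open>The projections\<close>

definition is_Pi_down :: "nat \<Rightarrow> nat set \<Rightarrow> (nat \<Rightarrow> nat) \<Rightarrow> (nat \<Rightarrow> nat) \<Rightarrow> bool" where
  "is_Pi_down n J w z \<longleftrightarrow> z \<in> SJ n J \<and> avoids231 n J z \<and> weak_le n z w \<and>
     (\<forall>y\<in>SJ n J. avoids231 n J y \<and> weak_le n y w \<longrightarrow> weak_le n y z)"

definition is_Pi_up :: "nat \<Rightarrow> nat set \<Rightarrow> (nat \<Rightarrow> nat) \<Rightarrow> (nat \<Rightarrow> nat) \<Rightarrow> bool" where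
  "is_Pi_up n J w z \<longleftrightarrow> z \<in> SJ n J \<and> avoids132 n J z \<and> weak_le n w z \<and>
     (\<forall>y\<in>SJ n J. avoids132 n J y \<and> weak_le n w y \<longrightarrow> weak_le n z y)"

lemma weak_le_antisym:
  assumes "x permutes {1..n}" "y permutes {1..n}" "weak_le n x y" "weak_le n y x"
  shows "x = y"
  using assms permutes_eq_if_inv_set_eq by (auto simp: weak_le_def)

lemma Pi_down_eqI:
  assumes "is_Pi_down n J w z"
  shows "Pi_down n J w = z"
  unfolding Pi_down_def is_Pi_down_def[symmetric]
proof (rule the_equality)
  fix z' assume "is_Pi_down n J w z'"
  with assms show "z' = z"
    unfolding is_Pi_down_def SJ_def by (blast intro: weak_le_antisym)
qed (fact assms)

lemma Pi_up_eqI: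
  assumes "is_Pi_up n J w z"
  shows "Pi_up n J w = z"
  unfolding Pi_up_def is_Pi_up_def[symmetric]
proof (rule the_equality)
  fix z' assume "is_Pi_up n J w z'"
  with assms show "z' = z"
    unfolding is_Pi_up_def SJ_def by (blast intro: weak_le_antisym)
qed (fact assms)

lemma is_Pi_down_swap_pattern231:
  assumes w: "w \<in> SJ n J" and pat: "pattern231 n J w i j k"
  shows "is_Pi_down n J (w \<circ> transpose i k) z \<longleftrightarrow> is_Pi_down n J w z"
proof -
  have "weak_le n y (w \<circ> transpose i k) \<longleftrightarrow> weak_le n y w"
    if "y \<in> SJ n J" "avoids231 n J y" for y
  proof -
    have "y permutes {1..n}"
      using that(1) by (simp add: SJ_def)
    then have "(i, k) \<notin> inv_set n y" if "inv_set n y \<subseteq> inv_set n w"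
      using pattern231_top_not_inv_below[OF _ _ that pat] \<open>avoids231 n J y\<close> by blast
    then show ?thesis
      using swap_pattern231(2)[OF w pat] by (auto simp: weak_le_def)
  qed
  then show ?thesis
    unfolding is_Pi_down_def by blast
qed

lemma is_Pi_up_swap_pattern132:
  assumes w: "w \<in> SJ n J" and pat: "pattern132 n J w i j k"
  shows "is_Pi_up n J (w \<circ> transpose i k) z \<longleftrightarrow> is_Pi_up n J w z"
proof -
  have "weak_le n (w \<circ> transpose i k) y \<longleftrightarrow> weak_le n w y"
    if "y \<in> SJ n J" "avoids132 n J y" for y
  proof -
    have "y permutes {1..n}" "inj w"
      using that(1) w permutes_inj by (auto simp: SJ_def)
    then have "(i, k) \<in> inv_set n y" if "inv_set n w \<subseteq> inv_set n y"
      using pattern132_top_inv_above[OF _ _ that _ pat] \<open>avoids132 n J y\<close> by blast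
    then show ?thesis
      using swap_pattern132(2)[OF w pat] by (auto simp: weak_le_def)
  qed
  then show ?thesis
    unfolding is_Pi_up_def by blast
qed

definition persistent_inversion :: "nat \<Rightarrow> nat set \<Rightarrow> (nat \<Rightarrow> nat) \<Rightarrow> nat \<Rightarrow> nat \<Rightarrow> bool" where
  "persistent_inversion n J w i k \<longleftrightarrow> (i, k) \<in> inv_set n w \<and>
     (\<forall>j. i < j \<and> j < k \<and> diff_regions n J i j k \<longrightarrow> (j, k) \<notin> inv_set n w)"

definition persistent_noninversion :: "nat \<Rightarrow> nat set \<Rightarrow> (nat \<Rightarrow> nat) \<Rightarrow> nat \<Rightarrow> nat \<Rightarrow> bool" where
  "persistent_noninversion n J w i k \<longleftrightarrow> (i, k) \<notin> inv_set n w \<and>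
     (\<forall>j. i < j \<and> j < k \<and> diff_regions n J i j k \<longrightarrow> (i, j) \<in> inv_set n w)"

lemma is_Pi_down_exists:
  assumes "w \<in> SJ n J"
  shows "\<exists>z. is_Pi_down n J w z \<and> (\<forall>i k. persistent_inversion n J w i k \<longrightarrow> (i, k) \<in> inv_set n z)"
  using assms
proof (induction "card (inv_set n w)" arbitrary: w rule: less_induct)
  case less
  show ?case
  proof (cases "avoids231 n J w")
    case True
    with less.prems have "is_Pi_down n J w w"
      by (simp add: is_Pi_down_def weak_le_def)
    then show ?thesis
      by (auto simp: persistent_inversion_def)
  next
    case False
    then obtain i j k where pat: "pattern231 n J w i j k"
      by (auto simp: avoids231_iff)
    let ?w' = "w \<circ> transpose i k"
    note swap = swap_pattern231[OF less.prems pat]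
    have "(i, k) \<in> inv_set n w" "(j, k) \<in> inv_set n w"
      using pat by (auto simp: pattern231_def inv_set_def)
    then have "card (inv_set n ?w') < card (inv_set n w)"
      using swap(2) card_Diff1_less[OF finite_inv_set] by simp
    then obtain z where z: "is_Pi_down n J ?w' z"
      and persists: "\<forall>a b. persistent_inversion n J ?w' a b \<longrightarrow> (a, b) \<in> inv_set n z"
      using less.hyps swap(1) by blast
    have "persistent_inversion n J ?w' a b" if "persistent_inversion n J w a b" for a b
      using that swap(2) pat \<open>(j, k) \<in> inv_set n w\<close>
      by (auto simp: persistent_inversion_def pattern231_def)
    then show ?thesis
      using z persists is_Pi_down_swap_pattern231[OF less.prems pat] by blast
  qed
qed

lemma is_Pi_up_exists:
  assumes "w \<in> SJ n J"
  shows "\<exists>z. is_Pi_up n J w z \<and> (\<forall>i k. persistent_noninversion n J w i k \<longrightarrow> (i, k) \<notin> inv_set n z)"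
  using assms
proof (induction "card ({1..n} \<times> {1..n} - inv_set n w)" arbitrary: w rule: less_induct)
  case less
  show ?case
  proof (cases "avoids132 n J w")
    case True
    with less.prems have "is_Pi_up n J w w"
      by (simp add: is_Pi_up_def weak_le_def)
    then show ?thesis
      by (auto simp: persistent_noninversion_def)
  next
    case False
    then obtain i j k where pat: "pattern132 n J w i j k"
      by (auto simp: avoids132_iff)
    let ?w' = "w \<circ> transpose i k"
    note swap = swap_pattern132[OF less.prems pat]
    have "(i, k) \<notin> inv_set n w" "(i, j) \<notin> inv_set n w" "(i, k) \<in> {1..n} \<times> {1..n}"
      using pat by (auto simp: pattern132_def inv_set_def)
    then have "{1..n} \<times> {1..n} - inv_set n ?w' \<subset> {1..n} \<times> {1..n} - inv_set n w"
      using swap(2) by blast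
    then have "card ({1..n} \<times> {1..n} - inv_set n ?w') < card ({1..n} \<times> {1..n} - inv_set n w)"
      by (simp add: psubset_card_mono)
    then obtain z where z: "is_Pi_up n J ?w' z"
      and persists: "\<forall>a b. persistent_noninversion n J ?w' a b \<longrightarrow> (a, b) \<notin> inv_set n z"
      using less.hyps swap(1) by blast
    have "persistent_noninversion n J ?w' a b" if "persistent_noninversion n J w a b" for a b
      using that swap(2) pat \<open>(i, j) \<notin> inv_set n w\<close>
      by (auto simp: persistent_noninversion_def pattern132_def)
    then show ?thesis
      using z persists is_Pi_up_swap_pattern132[OF less.prems pat] by blast
  qed
qed

lemma is_Pi_down_Pi_down: "w \<in> SJ n J \<Longrightarrow> is_Pi_down n J w (Pi_down n J w)"
  using is_Pi_down_exists Pi_down_eqI by metis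

lemma is_Pi_up_Pi_up: "w \<in> SJ n J \<Longrightarrow> is_Pi_up n J w (Pi_up n J w)"
  using is_Pi_up_exists Pi_up_eqI by metis

lemma inv_set_Pi_down_subset: "w \<in> SJ n J \<Longrightarrow> inv_set n (Pi_down n J w) \<subseteq> inv_set n w"
  using is_Pi_down_Pi_down by (auto simp: is_Pi_down_def weak_le_def)

lemma inv_set_Pi_up_supset: "w \<in> SJ n J \<Longrightarrow> inv_set n w \<subseteq> inv_set n (Pi_up n J w)"
  using is_Pi_up_Pi_up by (auto simp: is_Pi_up_def weak_le_def)

lemma Pi_down_swap_pattern231:
  "w \<in> SJ n J \<Longrightarrow> pattern231 n J w i j k \<Longrightarrow> Pi_down n J (w \<circ> transpose i k) = Pi_down n J w"
  by (metis Pi_down_eqI is_Pi_down_Pi_down is_Pi_down_swap_pattern231)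

lemma Pi_up_swap_pattern132:
  "w \<in> SJ n J \<Longrightarrow> pattern132 n J w i j k \<Longrightarrow> Pi_up n J (w \<circ> transpose i k) = Pi_up n J w"
  by (metis Pi_up_eqI is_Pi_up_Pi_up is_Pi_up_swap_pattern132)

lemma persistent_inversion_Pi_down:
  "w \<in> SJ n J \<Longrightarrow> persistent_inversion n J w i k \<Longrightarrow> (i, k) \<in> inv_set n (Pi_down n J w)"
  by (metis Pi_down_eqI is_Pi_down_exists)

lemma persistent_noninversion_Pi_up:
  "w \<in> SJ n J \<Longrightarrow> persistent_noninversion n J w i k \<Longrightarrow> (i, k) \<notin> inv_set n (Pi_up n J w)"
  by (metis Pi_up_eqI is_Pi_up_exists)

lemma weak_cover_swap:
  assumes u: "u permutes {1..n}" and v: "v permutes {1..n}" and cover: "weak_cover n u v"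
  obtains i k where "inv_set n v - inv_set n u = {(i, k)}" "v i = Suc (v k)" "u = v \<circ> transpose i k"
proof -
  obtain i k where sub: "inv_set n u \<subseteq> inv_set n v" and diff: "inv_set n v - inv_set n u = {(i, k)}"
    and adj: "v i = Suc (v k)"
    using cover by (auto simp: weak_cover_def)
  then have ik: "1 \<le> i" "i < k" "k \<le> n"
    by (auto simp: inv_set_def)
  have "inv_set n (v \<circ> transpose i k) = inv_set n u"
    using inv_set_swap_adjacent_values[OF permutes_inj[OF v] ik(2) adj] sub diff by blast
  moreover have "v \<circ> transpose i k permutes {1..n}"
    using permutes_compose[OF permutes_swap_id v] ik by simp
  ultimately have "u = v \<circ> transpose i k"
    using permutes_eq_if_inv_set_eq u by metis
  with diff adj show ?thesis
    using that by blast
qed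

lemma persistent_if_no_pattern231:
  assumes v: "v permutes {1..n}" and ik: "(i, k) \<in> inv_set n v" and adj: "v i = Suc (v k)"
    and no_pat: "\<nexists>j. pattern231 n J v i j k"
  shows "persistent_inversion n J v i k"
    and "persistent_noninversion n J (v \<circ> transpose i k) i k"
proof -
  have range: "1 \<le> i" "i < k" "k \<le> n"
    using ik by (auto simp: inv_set_def)
  have below: "v j < v k" if "i < j" "j < k" "diff_regions n J i j k" for j
  proof -
    have "\<not> v i < v j"
      using no_pat that range adj by (auto simp: pattern231_def)
    moreover have "v j \<noteq> v i" "v j \<noteq> v k"
      using that permutes_inj[OF v] by (auto simp: inj_eq)
    ultimately show ?thesis
      using adj by linarith
  qed
  show "persistent_inversion n J v i k"
    using ik by (auto simp: persistent_inversion_def inv_set_def dest: below)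
  have "(i, k) \<notin> inv_set n (v \<circ> transpose i k)"
    using inv_set_swap_adjacent_values[OF permutes_inj[OF v] range(2) adj] by simp
  moreover have "(i, j) \<in> inv_set n (v \<circ> transpose i k)"
    if "i < j" "j < k" "diff_regions n J i j k" for j
    using below[OF that] that range by (simp add: inv_set_def)
  ultimately show "persistent_noninversion n J (v \<circ> transpose i k) i k"
    by (simp add: persistent_noninversion_def)
qed

theorem lemma3p16:
  fixes n :: nat and J :: "nat set" and u v :: "nat \<Rightarrow> nat"
  assumes "J \<subseteq> {1..<n}"
    and "u \<in> SJ n J" and "v \<in> SJ n J"
    and "weak_cover n u v"
  shows "((\<exists>i j k. 1 \<le> i \<and> i < j \<and> j < k \<and> k \<le> n \<and> diff_regions n J i j k \<and>
              v k < v i \<and> v i < v j \<and> v i = v k + 1 \<and>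
              inv_set n v - inv_set n u = {(i, k)})
           \<longleftrightarrow> Pi_down n J u = Pi_down n J v)
       \<and> (Pi_down n J u = Pi_down n J v \<longleftrightarrow> Pi_up n J u = Pi_up n J v)"
proof -
  have u: "u permutes {1..n}" and v: "v permutes {1..n}"
    using assms(2,3) by (simp_all add: SJ_def)
  obtain i k where diff: "inv_set n v - inv_set n u = {(i, k)}" and adj: "v i = Suc (v k)"
    and u_eq: "u = v \<circ> transpose i k"
    using weak_cover_swap[OF u v assms(4)] .
  have v_eq: "v = u \<circ> transpose i k"
    by (simp add: u_eq comp_assoc)
  have ik: "(i, k) \<in> inv_set n v" "(i, k) \<notin> inv_set n u"
    using diff by auto
  show ?thesis
  proof (cases "\<exists>j. pattern231 n J v i j k")
    case True
    then obtain j where pat: "pattern231 n J v i j k" ..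
    then have "pattern132 n J u i j k"
      unfolding u_eq by (rule pattern132_swap_pattern231)
    then have "Pi_up n J u = Pi_up n J v"
      using Pi_up_swap_pattern132[OF assms(2)] v_eq by simp
    moreover have "Pi_down n J u = Pi_down n J v"
      using Pi_down_swap_pattern231[OF assms(3) pat] u_eq by simp
    ultimately show ?thesis
      using pat diff by (auto simp: pattern231_def)
  next
    case False
    note persistent = persistent_if_no_pattern231[OF v ik(1) adj False, folded u_eq]
    have "Pi_down n J u \<noteq> Pi_down n J v"
      using persistent_inversion_Pi_down[OF assms(3) persistent(1)]
        inv_set_Pi_down_subset[OF assms(2)] ik(2) by auto
    moreover have "Pi_up n J u \<noteq> Pi_up n J v"
      using persistent_noninversion_Pi_up[OF assms(2) persistent(2)]
        inv_set_Pi_up_supset[OF assms(3)] ik(1) by auto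
    ultimately show ?thesis
      using False diff by (auto simp: pattern231_def)
  qed
qed

end
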